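(* (5) $\overline{\mathcal{H}_{\mbox{s-conv}}(S^n)}\subset\mathcal{H}^\circ(S^n)$; (6) $\bigcirc(\mathcal{H}_{\mbox{s-conv}}(S^n))\neq\mathcal{H}_{\mbox{s-conv}}(S^n)$; (7) $\bigcirc(\overline{\mathcal{H}_{\mbox{s-conv}}(S^n)})=\overline{\mathcal{H}_{\mbox{s-conv}}(S^n)}$; (8) the restriction of $\bigcirc$ to $\overline{\mathcal{H}_{\mbox{s-conv}}(S^n)}$ is injective. Here $\bigcirc(W)=W^\circ$.
   Context: $S^n$ is the unit sphere in $\mathbb{R}^{n+1}$, $n\ge1$; $|PQ|=\arccos(P\cdot Q)$. $H(P)=\{Q\in S^n:P\cdot Q\ge0\}$ and $W^\circ=\bigcap_{P\in W}H(P)$. $\mathcal{H}(S^n)$ is the set of non-empty closed subsets of $S^n$ with the Pompeiu-Hausdorff metric $h(A,B)=\max\{\max_{x\in A}\min_{y\in B}|xy|,\ \max_{y\in B}\min_{x\in A}|xy|\}$, and $\mathcal{H}^\circ(S^n)=\{W\in\mathcal{H}(S^n):W^\circ\ne\emptyset\}$. A subset is hemispherical if it is disjoint from $H(P)$ for some $P\in S^n$. For $A,B$ in a hemispherical set, the arc $AB=\{((1-t)A+tB)/\|(1-t)A+tB\|:0\le t\le1\}$; a hemispherical set $W$ is spherical convex if $AB\subset W$ for all $A,B\in W$. $\mathcal{H}_{\mbox{s-conv}}(S^n)$ is the set of non-empty closed spherical convex subsets of $S^n$, and $\overline{\mathcal{H}_{\mbox{s-conv}}(S^n)}$ is its closure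 in $(\mathcal{H}(S^n),h)$. *)

theory Defs
  imports "HOL-Analysis.Analysis"
begin

text \<open>The unit sphere S^n is modelled as sphere 0 1 in a Euclidean space of
dimension n+1 (the type 'a), with n \<ge> 1 meaning DIM('a) \<ge> 2.\<close>

definition sdist :: "'a::euclidean_space \<Rightarrow> 'a \<Rightarrow> real" where
  "sdist P Q = arccos (P \<bullet> Q)"

definition hemi :: "'a::euclidean_space \<Rightarrow> 'a set" where
  "hemi P = {Q \<in> sphere 0 1. P \<bullet> Q \<ge> 0}"

definition polar :: "'a::euclidean_space set \<Rightarrow> 'a set" where
  "polar W = sphere 0 1 \<inter> (\<Inter>P\<in>W. hemi P)"

definition hdist :: "'a::euclidean_space set \<Rightarrow> 'a set \<Rightarrow> real" where
  "hdist A B = max (SUP x\<in>A. INF y\<in>B. sdist x y) (SUP y\<in>B. INF x\<in>A. sdist x y)"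

definition Hspace :: "'a::euclidean_space set set" where
  "Hspace = {W. W \<subseteq> sphere 0 1 \<and> W \<noteq> {} \<and> closed W}"

definition Hpolar :: "'a::euclidean_space set set" where
  "Hpolar = {W \<in> Hspace. polar W \<noteq> {}}"

definition hemispherical :: "'a::euclidean_space set \<Rightarrow> bool" where
  "hemispherical W \<longleftrightarrow> W \<subseteq> sphere 0 1 \<and> (\<exists>P\<in>sphere 0 1. W \<inter> hemi P = {})"

definition sarc :: "'a::euclidean_space \<Rightarrow> 'a \<Rightarrow> 'a set" where
  "sarc A B = {((1 - t) *\<^sub>R A + t *\<^sub>R B) /\<^sub>R norm ((1 - t) *\<^sub>R A + t *\<^sub>R B) | t. 0 \<le> t \<and> t \<le> 1}"

definition s_convex :: "'a::euclidean_space set \<Rightarrow> bool" where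
  "s_convex W \<longleftrightarrow> hemispherical W \<and> (\<forall>A\<in>W. \<forall>B\<in>W. sarc A B \<subseteq> W)"

definition Hsconv :: "'a::euclidean_space set set" where
  "Hsconv = {W \<in> Hspace. s_convex W}"

definition hclosure :: "'a::euclidean_space set set \<Rightarrow> 'a set set" where
  "hclosure F = {W \<in> Hspace. \<forall>e>0. \<exists>K\<in>F. hdist W K < e}"

end

theory Submission
  imports Defs
begin

text \<open>A Hausdorff limit \<open>W\<close> of closed spherical convex sets is cone convex: normalizing any
  nonzero point of its convex hull lands in \<open>W\<close>, because convex hulls move no more than their
  generating sets and convex hulls of spherical convex sets normalize back into them. For cone
  convex \<open>W\<close> the bipolar identity \<open>W\<^sup>\<circ>\<^sup>\<circ> = W\<close> follows by separating a point from the closed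
  convex cone over \<open>W\<close>. Such a limit is never orthogonal to its polar, so some \<open>u \<in> W\<close> and
  \<open>y \<in> W\<^sup>\<circ>\<close> satisfy \<open>u \<bullet> y > 0\<close>; this makes \<open>W\<^sup>\<circ>\<close> nonempty and the limit of the spherical convex
  caps \<open>W\<^sup>\<circ> \<inter> {x. u \<bullet> x \<ge> e}\<close>.
  Finally \<open>{P}\<^sup>\<circ>\<close> is a closed hemisphere, which is not hemispherical once \<open>n \<ge> 1\<close>.\<close>

lemma inner_unit_sphere_bounds:
  assumes "x \<in> sphere (0::'a::euclidean_space) 1" "y \<in> sphere 0 1"
  shows "-1 \<le> x \<bullet> y" "x \<bullet> y \<le> 1"
  using Cauchy_Schwarz_ineq2[of x y] assms by auto

lemma dist_sphere_sq:
  assumes "x \<in> sphere (0::'a::euclidean_space) 1" "y \<in> sphere 0 1"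
  shows "(dist x y)\<^sup>2 = 2 - 2 * (x \<bullet> y)"
proof -
  have "(dist x y)\<^sup>2 = x \<bullet> x + y \<bullet> y - 2 * (x \<bullet> y)"
    by (simp add: dist_norm power2_norm_eq_inner inner_diff inner_commute)
  then show ?thesis
    using assms by (simp add: dot_square_norm)
qed

lemma inner_pos_if_dist_less_sqrt2:
  assumes "x \<in> sphere (0::'a::euclidean_space) 1" "y \<in> sphere 0 1" "dist x y < sqrt 2"
  shows "0 < x \<bullet> y"
proof -
  have "(dist x y)\<^sup>2 < (sqrt 2)\<^sup>2"
    using assms(3) by (intro power_strict_mono) auto
  then show ?thesis
    using dist_sphere_sq[OF assms(1,2)] by simp
qed

lemma sdist_commute: "sdist x y = sdist y x"
  by (simp add: sdist_def inner_commute)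

lemma sdist_bounds:
  assumes "x \<in> sphere (0::'a::euclidean_space) 1" "y \<in> sphere 0 1"
  shows "0 \<le> sdist x y" "sdist x y \<le> pi"
  using arccos_bounded inner_unit_sphere_bounds[OF assms] by (auto simp: sdist_def)

text \<open>The chord is shorter than the arc: \<open>|x - y| = 2 sin (\<theta>/2) \<le> \<theta>\<close>.\<close>
lemma dist_le_sdist:
  assumes "x \<in> sphere (0::'a::euclidean_space) 1" "y \<in> sphere 0 1"
  shows "dist x y \<le> sdist x y"
proof -
  define \<theta> where "\<theta> = sdist x y"
  have \<theta>: "0 \<le> \<theta>" "cos \<theta> = x \<bullet> y"
    using arccos_bounded inner_unit_sphere_bounds[OF assms] by (auto simp: \<theta>_def sdist_def)
  have "(dist x y)\<^sup>2 = 4 * (sin (\<theta>/2))\<^sup>2"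
    using dist_sphere_sq[OF assms] cos_double_sin[of "\<theta>/2"] \<theta>(2) by simp
  also have "\<dots> \<le> 4 * (\<theta>/2)\<^sup>2"
    using abs_sin_x_le_abs_x[of "\<theta>/2"] unfolding abs_le_square_iff by simp
  also have "\<dots> = \<theta>\<^sup>2"
    by (simp add: power2_eq_square)
  finally have "dist x y \<le> \<theta>"
    using \<theta>(1) by (rule power2_le_imp_le)
  then show ?thesis
    by (simp add: \<theta>_def)
qed

lemma sdist_less_if_dist_less:
  assumes "x \<in> sphere (0::'a::euclidean_space) 1" "y \<in> sphere 0 1" "0 < e" "e \<le> pi"
    and "dist x y < sqrt (2 - 2 * cos e)"
  shows "sdist x y < e"
proof -
  have "(dist x y)\<^sup>2 < (sqrt (2 - 2 * cos e))\<^sup>2"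
    using assms(5) by (intro power_strict_mono) auto
  then have "(dist x y)\<^sup>2 < 2 - 2 * cos e"
    by simp
  then have "cos e < x \<bullet> y"
    using dist_sphere_sq[OF assms(1,2)] by simp
  then have "arccos (x \<bullet> y) < arccos (cos e)"
    using arccos_less_arccos[of "cos e" "x \<bullet> y"] inner_unit_sphere_bounds[OF assms(1,2)] by simp
  then show ?thesis
    using arccos_cos[of e] assms by (simp add: sdist_def)
qed

lemma hdist_eq_max:
  "hdist A B = max (SUP x\<in>A. INF y\<in>B. sdist x y) (SUP x\<in>B. INF y\<in>A. sdist x y)"
  by (simp add: hdist_def sdist_commute)

lemma INF_sdist_le:
  assumes "B \<subseteq> sphere 0 1" "x \<in> sphere (0::'a::euclidean_space) 1" "y \<in> B"
  shows "(INF y\<in>B. sdist x y) \<le> sdist x y"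
  using assms sdist_bounds(1)[of x] by (intro cINF_lower bdd_belowI2[where m=0]) blast+

lemma sdist_less_if_SUP_INF_less:
  assumes A: "A \<subseteq> sphere (0::'a::euclidean_space) 1" and B: "B \<subseteq> sphere 0 1" "B \<noteq> {}"
    and less: "(SUP x\<in>A. INF y\<in>B. sdist x y) < e" and x: "x \<in> A"
  shows "\<exists>y\<in>B. sdist x y < e"
proof -
  obtain y0 where "y0 \<in> B"
    using B(2) by blast
  have "(INF y\<in>B. sdist x' y) \<le> pi" if "x' \<in> A" for x'
  proof -
    have x': "x' \<in> sphere 0 1"
      using that A by blast
    have "(INF y\<in>B. sdist x' y) \<le> sdist x' y0"
      by (rule INF_sdist_le[OF B(1) x' \<open>y0 \<in> B\<close>])
    also have "\<dots> \<le> pi"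
      using B(1) \<open>y0 \<in> B\<close> by (intro sdist_bounds(2)[OF x']) blast
    finally show ?thesis .
  qed
  then have "(INF y\<in>B. sdist x y) \<le> (SUP x\<in>A. INF y\<in>B. sdist x y)"
    using x by (intro cSUP_upper bdd_aboveI2[where M=pi]) auto
  with less have "(INF y\<in>B. sdist x y) < e"
    by linarith
  moreover have "bdd_below ((\<lambda>y. sdist x y) ` B)"
    using x A B(1) sdist_bounds(1)[of x] by (intro bdd_belowI2[where m=0]) blast
  ultimately show ?thesis
    by (simp add: cINF_less_iff[OF B(2)])
qed

lemma SUP_INF_sdist_le:
  assumes "A \<noteq> {}" "A \<subseteq> sphere (0::'a::euclidean_space) 1" "B \<subseteq> sphere 0 1"
    and near: "\<And>x. x \<in> A \<Longrightarrow> \<exists>y\<in>B. sdist x y \<le> e"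
  shows "(SUP x\<in>A. INF y\<in>B. sdist x y) \<le> e"
proof (rule cSUP_least[OF assms(1)])
  fix x assume "x \<in> A"
  then obtain y where y: "y \<in> B" "sdist x y \<le> e"
    using near by blast
  have "x \<in> sphere 0 1"
    using \<open>x \<in> A\<close> assms(2) by blast
  then have "(INF y\<in>B. sdist x y) \<le> sdist x y"
    by (rule INF_sdist_le[OF assms(3) _ y(1)])
  with y(2) show "(INF y\<in>B. sdist x y) \<le> e"
    by linarith
qed

definition mutually_near :: "'a::euclidean_space set \<Rightarrow> 'a set \<Rightarrow> real \<Rightarrow> bool" where
  "mutually_near A B d \<longleftrightarrow> (\<forall>x\<in>A. \<exists>y\<in>B. dist x y < d) \<and> (\<forall>y\<in>B. \<exists>x\<in>A. dist y x < d)"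

lemma exists_near_if_SUP_INF_less:
  assumes "A \<subseteq> sphere (0::'a::euclidean_space) 1" "B \<subseteq> sphere 0 1" "B \<noteq> {}"
    and "(SUP x\<in>A. INF y\<in>B. sdist x y) < e" "x \<in> A"
  shows "\<exists>y\<in>B. dist x y < e"
proof -
  obtain y where y: "y \<in> B" "sdist x y < e"
    using sdist_less_if_SUP_INF_less[OF assms] by blast
  have "x \<in> sphere 0 1" "y \<in> sphere 0 1"
    using assms(1,2,5) y(1) by blast+
  then have "dist x y < e"
    using dist_le_sdist y(2) by fastforce
  with y(1) show ?thesis ..
qed

lemma mutually_near_if_hdist_less:
  fixes A B :: "'a::euclidean_space set"
  assumes "A \<subseteq> sphere 0 1" "A \<noteq> {}" "B \<subseteq> sphere 0 1" "B \<noteq> {}" and "hdist A B < e"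
  shows "mutually_near A B e"
proof -
  have "(SUP x\<in>A. INF y\<in>B. sdist x y) < e" "(SUP x\<in>B. INF y\<in>A. sdist x y) < e"
    using assms(5) unfolding hdist_eq_max by simp_all
  then show ?thesis
    unfolding mutually_near_def
    using exists_near_if_SUP_INF_less[OF assms(1,3,4)] exists_near_if_SUP_INF_less[OF assms(3,1,2)]
    by blast
qed

lemma SUP_INF_sdist_le_if_near:
  assumes "A \<noteq> {}" "A \<subseteq> sphere (0::'a::euclidean_space) 1" "B \<subseteq> sphere 0 1"
    and e: "0 < e" "e \<le> pi" and near: "\<forall>x\<in>A. \<exists>y\<in>B. dist x y < sqrt (2 - 2 * cos e)"
  shows "(SUP x\<in>A. INF y\<in>B. sdist x y) \<le> e"
proof (rule SUP_INF_sdist_le[OF assms(1-3)])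
  fix x assume "x \<in> A"
  then obtain y where y: "y \<in> B" "dist x y < sqrt (2 - 2 * cos e)"
    using near by blast
  have "x \<in> sphere 0 1" "y \<in> sphere 0 1"
    using assms(2,3) \<open>x \<in> A\<close> y(1) by blast+
  then have "sdist x y < e"
    using e y(2) by (rule sdist_less_if_dist_less)
  with y(1) show "\<exists>y\<in>B. sdist x y \<le> e"
    using less_imp_le by blast
qed

lemma hdist_less_if_mutually_near:
  fixes A B :: "'a::euclidean_space set"
  assumes "A \<subseteq> sphere 0 1" "A \<noteq> {}" "B \<subseteq> sphere 0 1" "B \<noteq> {}"
    and e: "0 < e" "e \<le> pi" and near: "mutually_near A B (sqrt (2 - 2 * cos (e/2)))"
  shows "hdist A B < e"
proof -
  have e2: "0 < e/2" "e/2 \<le> pi"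
    using e by simp_all
  have "(SUP x\<in>A. INF y\<in>B. sdist x y) \<le> e/2"
    using near unfolding mutually_near_def
    by (intro SUP_INF_sdist_le_if_near[OF assms(2,1,3) e2]) blast
  moreover have "(SUP x\<in>B. INF y\<in>A. sdist x y) \<le> e/2"
    using near unfolding mutually_near_def
    by (intro SUP_INF_sdist_le_if_near[OF assms(4,3,1) e2]) blast
  ultimately show ?thesis
    using e(1) unfolding hdist_eq_max by simp
qed

lemma hclosure_mutually_near:
  assumes "W \<in> hclosure F" "F \<subseteq> Hspace" "d > 0"
  obtains K where "K \<in> F" "mutually_near W K d"
proof -
  obtain K where K: "K \<in> F" "hdist W K < d"
    using assms(1,3) unfolding hclosure_def by blast
  have "W \<in> Hspace" "K \<in> Hspace"
    using assms(1,2) K(1) unfolding hclosure_def by blast+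
  then have "mutually_near W K d"
    using K(2) by (intro mutually_near_if_hdist_less) (simp_all add: Hspace_def)
  with K(1) show thesis
    by (rule that)
qed

lemma hclosureI_mutually_near:
  fixes W :: "'a::euclidean_space set"
  assumes W: "W \<in> Hspace" and F: "F \<subseteq> Hspace"
    and near: "\<And>d. d > 0 \<Longrightarrow> \<exists>K\<in>F. mutually_near W K d"
  shows "W \<in> hclosure F"
  unfolding hclosure_def
proof (intro CollectI conjI W allI impI)
  fix e :: real assume "e > 0"
  define e' where "e' = min e pi"
  have e': "0 < e'" "e' \<le> pi" "e' \<le> e"
    using \<open>e > 0\<close> by (simp_all add: e'_def)
  have "cos (e'/2) < 1"
    using cos_monotone_0_pi[of 0 "e'/2"] e' by simp
  then obtain K where K: "K \<in> F" "mutually_near W K (sqrt (2 - 2 * cos (e'/2)))"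
    using near[of "sqrt (2 - 2 * cos (e'/2))"] by auto
  have "K \<in> Hspace"
    using K(1) F by blast
  then have "hdist W K < e'"
    using W K(2) e' by (intro hdist_less_if_mutually_near) (simp_all add: Hspace_def)
  with K(1) e'(3) show "\<exists>K\<in>F. hdist W K < e"
    by force
qed

lemma Hspace_hclosure: "W \<in> hclosure F \<Longrightarrow> W \<in> Hspace"
  by (simp add: hclosure_def)

lemma compact_Hspace: "W \<in> Hspace \<Longrightarrow> compact W"
  unfolding Hspace_def compact_eq_bounded_closed using bounded_subset[OF bounded_sphere] by blast

lemma Hsconv_subset_Hspace: "Hsconv \<subseteq> Hspace"
  by (auto simp: Hsconv_def)

definition cone_convex :: "'a::euclidean_space set \<Rightarrow> bool" where
  "cone_convex W \<longleftrightarrow> (\<forall>x\<in>convex hull W. x \<noteq> 0 \<longrightarrow> x /\<^sub>R norm x \<in> W)"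

lemma norm_diff_normalize_le:
  fixes x z :: "'a::real_normed_vector"
  assumes "x \<noteq> 0" "z \<noteq> 0"
  shows "norm (x /\<^sub>R norm x - z /\<^sub>R norm z) \<le> 2 * norm (x - z) / norm x"
proof -
  have nx: "norm x > 0" and nz: "norm z > 0"
    using assms by auto
  define a where "a = (norm z - norm x) / (norm x * norm z)"
  have "x /\<^sub>R norm x - z /\<^sub>R norm z = (x - z) /\<^sub>R norm x + a *\<^sub>R z"
    using nx nz by (simp add: a_def algebra_simps divide_inverse)
  then have "norm (x /\<^sub>R norm x - z /\<^sub>R norm z) \<le> norm ((x - z) /\<^sub>R norm x) + norm (a *\<^sub>R z)"
    by (simp only: norm_triangle_ineq)
  also have "norm ((x - z) /\<^sub>R norm x) = norm (x - z) / norm x"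
    using nx by (simp add: divide_inverse mult.commute)
  also have "norm (a *\<^sub>R z) = \<bar>norm z - norm x\<bar> / norm x"
    using nx nz by (simp add: a_def abs_divide abs_mult)
  also have "\<dots> \<le> norm (x - z) / norm x"
    using nx norm_triangle_ineq3[of z x] by (simp add: divide_right_mono norm_minus_commute)
  finally show ?thesis
    unfolding mult_2 add_divide_distrib by simp
qed

lemma normalize_combination_in_sarc:
  fixes x y :: "'a::euclidean_space"
  assumes "x \<noteq> 0" "y \<noteq> 0" "0 \<le> u" "0 \<le> v" "u + v = 1"
  shows "(u *\<^sub>R x + v *\<^sub>R y) /\<^sub>R norm (u *\<^sub>R x + v *\<^sub>R y) \<in> sarc (x /\<^sub>R norm x) (y /\<^sub>R norm y)"
proof -
  define c where "c = u * norm x + v * norm y"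
  have c: "c > 0"
    using assms by (cases "u = 0") (auto simp: c_def add_pos_nonneg)
  define s where "s = v * norm y / c"
  have s: "0 \<le> s" "s \<le> 1" "1 - s = u * norm x / c"
    using c assms by (auto simp: s_def c_def field_simps)
  have "(1 - s) / norm x = u / c"
    unfolding s(3) using assms(1) by simp
  moreover have "s / norm y = v / c"
    unfolding s_def using assms(2) by simp
  ultimately have "(1 - s) *\<^sub>R (x /\<^sub>R norm x) + s *\<^sub>R (y /\<^sub>R norm y) = (u *\<^sub>R x + v *\<^sub>R y) /\<^sub>R c"
    by (simp add: scaleR_add_right divide_inverse mult.commute)
  then have "(u *\<^sub>R x + v *\<^sub>R y) /\<^sub>R norm (u *\<^sub>R x + v *\<^sub>R y)
      = ((1 - s) *\<^sub>R (x /\<^sub>R norm x) + s *\<^sub>R (y /\<^sub>R norm y))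
        /\<^sub>R norm ((1 - s) *\<^sub>R (x /\<^sub>R norm x) + s *\<^sub>R (y /\<^sub>R norm y))"
    using c by simp
  with s(1,2) show ?thesis
    unfolding sarc_def by blast
qed

text \<open>The open cone over an s-convex set is convex, so the whole convex hull of the set lies in
  an open half-space and normalizes back into the set.\<close>
lemma s_convex_convex_hull:
  fixes K :: "'a::euclidean_space set"
  assumes "s_convex K"
  obtains p where "\<And>x. x \<in> convex hull K \<Longrightarrow> p \<bullet> x < 0 \<and> x /\<^sub>R norm x \<in> K"
proof -
  obtain P where P: "K \<subseteq> sphere 0 1" "K \<inter> hemi P = {}"
    using assms by (auto simp: s_convex_def hemispherical_def)
  define T where "T = {x. P \<bullet> x < 0 \<and> x /\<^sub>R norm x \<in> K}"
  have "K \<subseteq> T"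
    using P by (force simp: T_def hemi_def)
  moreover have "convex T"
    unfolding convex_alt
  proof (intro ballI allI impI)
    fix x y and t :: real
    assume x: "x \<in> T" and y: "y \<in> T" and t: "0 \<le> t \<and> t \<le> 1"
    have "P \<bullet> ((1 - t) *\<^sub>R x + t *\<^sub>R y) = (1 - t) * (P \<bullet> x) + t * (P \<bullet> y)"
      by (simp add: inner_add_right)
    also have "\<dots> < 0"
      using x y t by (cases "t = 0") (auto simp: T_def intro!: add_nonpos_neg
          mult_nonneg_nonpos mult_pos_neg)
    finally have "P \<bullet> ((1 - t) *\<^sub>R x + t *\<^sub>R y) < 0" .
    moreover have "x \<noteq> 0" "y \<noteq> 0"
      using x y by (auto simp: T_def)
    with assms x y t
    have "((1 - t) *\<^sub>R x + t *\<^sub>R y) /\<^sub>R norm ((1 - t) *\<^sub>R x + t *\<^sub>R y) \<in> K"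
      using normalize_combination_in_sarc[of x y "1 - t" t] by (auto simp: s_convex_def T_def)
    ultimately show "(1 - t) *\<^sub>R x + t *\<^sub>R y \<in> T"
      by (simp add: T_def)
  qed
  ultimately have "convex hull K \<subseteq> T"
    by (rule hull_minimal)
  then show thesis
    using that[of P] by (auto simp: T_def)
qed

lemma convex_hull_near:
  fixes W K :: "'a::real_normed_vector set"
  assumes near: "\<forall>w\<in>W. \<exists>k\<in>K. dist w k < d" and x: "x \<in> convex hull W"
  shows "\<exists>x'\<in>convex hull K. norm (x - x') \<le> d"
proof -
  obtain S u where S: "finite S" "S \<subseteq> W" "\<And>v. v \<in> S \<Longrightarrow> 0 \<le> u v" "sum u S = 1"
      "(\<Sum>v\<in>S. u v *\<^sub>R v) = x"
    using x unfolding convex_hull_explicit by blast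
  obtain f where f: "\<And>w. w \<in> W \<Longrightarrow> f w \<in> K \<and> dist w (f w) < d"
    using bchoice[of W "\<lambda>w k. k \<in> K \<and> dist w k < d"] near by blast
  define x' where "x' = (\<Sum>v\<in>S. u v *\<^sub>R f v)"
  have "x' \<in> convex hull K"
    unfolding x'_def using S f
    by (intro convex_sum[OF S(1) convex_convex_hull S(4) S(3)]) (auto intro: hull_inc)
  moreover have "norm (x - x') \<le> d"
  proof -
    have "norm (x - x') = norm (\<Sum>v\<in>S. u v *\<^sub>R (v - f v))"
      by (simp add: S(5)[symmetric] x'_def sum_subtractf scaleR_diff_right)
    also have "\<dots> \<le> (\<Sum>v\<in>S. u v * d)"
    proof (rule sum_norm_le)
      fix v assume "v \<in> S"
      then have "norm (v - f v) \<le> d"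
        using f[of v] S(2) by (auto simp: dist_norm)
      then show "norm (u v *\<^sub>R (v - f v)) \<le> u v * d"
        using S(3)[OF \<open>v \<in> S\<close>] by (simp add: mult_left_mono)
    qed
    also have "\<dots> = d"
      using S(4) by (simp add: sum_distrib_right[symmetric])
    finally show ?thesis .
  qed
  ultimately show ?thesis ..
qed

text \<open>Near \<open>x\<close>, a normalized point of the convex hull of an approximating s-convex set lies in
  that set, and is in turn approximated by a point of \<open>W\<close>.\<close>
lemma cone_convex_hclosure_Hsconv:
  fixes W :: "'a::euclidean_space set"
  assumes W: "W \<in> hclosure Hsconv"
  shows "cone_convex W"
  unfolding cone_convex_def
proof (intro ballI impI)
  fix x assume x: "x \<in> convex hull W" "x \<noteq> 0"
  have "closed W"
    using Hspace_hclosure[OF W] by (simp add: Hspace_def)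
  moreover have "x /\<^sub>R norm x \<in> closure W"
    unfolding closure_approachable
  proof (intro allI impI)
    fix \<epsilon> :: real assume "\<epsilon> > 0"
    define d where "d = min (\<epsilon>/2) (\<epsilon> * norm x / 4)"
    have d: "d > 0" "d \<le> \<epsilon>/2" "2 * d / norm x \<le> \<epsilon>/2"
      using \<open>\<epsilon> > 0\<close> x(2) by (auto simp: d_def field_simps)
    obtain K where K: "K \<in> Hsconv" "mutually_near W K d"
      using hclosure_mutually_near[OF W Hsconv_subset_Hspace d(1)] by blast
    obtain p where p: "\<And>y. y \<in> convex hull K \<Longrightarrow> p \<bullet> y < 0 \<and> y /\<^sub>R norm y \<in> K"
      using s_convex_convex_hull K(1) by (auto simp: Hsconv_def)
    obtain x' where x': "x' \<in> convex hull K" "norm (x - x') \<le> d"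
      using convex_hull_near[of W K d x] x(1) K(2) unfolding mutually_near_def by blast
    have "x' \<noteq> 0" "x' /\<^sub>R norm x' \<in> K"
      using p[OF x'(1)] by auto
    then obtain w where w: "w \<in> W" "dist (x' /\<^sub>R norm x') w < d"
      using K(2) by (auto simp: mutually_near_def)
    have "dist (x' /\<^sub>R norm x') (x /\<^sub>R norm x) \<le> 2 * norm (x - x') / norm x"
      using norm_diff_normalize_le[OF x(2) \<open>x' \<noteq> 0\<close>] by (simp add: dist_norm norm_minus_commute)
    also have "\<dots> \<le> 2 * d / norm x"
      using x'(2) by (simp add: divide_right_mono)
    also have "\<dots> \<le> \<epsilon>/2"
      by (rule d(3))
    finally have "dist w (x /\<^sub>R norm x) < \<epsilon>"
      using w(2) d(2) dist_triangle[of w "x /\<^sub>R norm x" "x' /\<^sub>R norm x'"]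
      by (simp add: dist_commute)
    with w(1) show "\<exists>y\<in>W. dist y (x /\<^sub>R norm x) < \<epsilon>"
      by blast
  qed
  ultimately show "x /\<^sub>R norm x \<in> W"
    by simp
qed

lemma mem_polar: "Q \<in> polar W \<longleftrightarrow> Q \<in> sphere 0 1 \<and> (\<forall>P\<in>W. 0 \<le> P \<bullet> Q)"
  by (auto simp: polar_def hemi_def)

lemma closed_polar: "closed (polar (W :: 'a::euclidean_space set))"
proof -
  have "polar W = sphere 0 1 \<inter> (\<Inter>P\<in>W. {Q. P \<bullet> Q \<ge> 0})"
    by (auto simp: mem_polar)
  then show ?thesis
    by (auto intro!: closed_Int closed_INT closed_halfspace_ge)
qed

lemma cone_convex_polar: "cone_convex (polar (W :: 'a::euclidean_space set))"
  unfolding cone_convex_def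
proof (intro ballI impI)
  fix x assume x: "x \<in> convex hull polar W" "x \<noteq> 0"
  have "convex {Q::'a. \<forall>P\<in>W. 0 \<le> P \<bullet> Q}"
    by (auto simp: convex_def inner_add_right)
  then have "convex hull polar W \<subseteq> {Q. \<forall>P\<in>W. 0 \<le> P \<bullet> Q}"
    by (intro hull_minimal) (auto simp: mem_polar)
  with x show "x /\<^sub>R norm x \<in> polar W"
    by (auto simp: mem_polar)
qed

lemma subset_polar_polar:
  assumes "W \<subseteq> sphere 0 1"
  shows "W \<subseteq> polar (polar W)"
proof
  fix w assume "w \<in> W"
  then have "0 \<le> Q \<bullet> w" if "Q \<in> polar W" for Q
    using that unfolding mem_polar by (metis inner_commute)
  with \<open>w \<in> W\<close> assms show "w \<in> polar (polar W)"
    by (auto simp: mem_polar)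
qed

lemma conic_hull_convex_hull_eq:
  assumes "cone_convex W" "W \<noteq> {}"
  shows "conic hull (convex hull W) = conic hull W"
proof
  show "conic hull (convex hull W) \<subseteq> conic hull W"
  proof
    fix y assume "y \<in> conic hull (convex hull W)"
    then obtain c z where cz: "y = c *\<^sub>R z" "0 \<le> c" "z \<in> convex hull W"
      by (auto simp: conic_hull_explicit)
    show "y \<in> conic hull W"
    proof (cases "z = 0")
      case True
      then show ?thesis
        using cz(1) assms(2) by simp
    next
      case False
      then have "z /\<^sub>R norm z \<in> W" "y = (c * norm z) *\<^sub>R (z /\<^sub>R norm z)"
        using assms(1) cz by (auto simp: cone_convex_def)
      with cz(2) show ?thesis
        unfolding conic_hull_explicit by fastforce
    qed
  qed
  show "conic hull W \<subseteq> conic hull (convex hull W)"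
    by (intro hull_mono hull_subset)
qed

lemma separating_halfspace_closed_convex_cone:
  fixes C :: "'a::euclidean_space set"
  assumes "conic C" "convex C" "closed C" "C \<noteq> {}" "x \<notin> C"
  obtains a where "a \<bullet> x < 0" "\<And>y. y \<in> C \<Longrightarrow> 0 \<le> a \<bullet> y"
proof -
  obtain a b where ab: "a \<bullet> x < b" "\<And>y. y \<in> C \<Longrightarrow> b < a \<bullet> y"
    using separating_hyperplane_closed_point[OF assms(2,3,5)] by blast
  have "b < 0"
    using ab(2)[of 0] assms(1,4) by (simp add: conic_contains_0)
  have "0 \<le> a \<bullet> y" if "y \<in> C" for y
  proof (rule ccontr)
    assume "\<not> 0 \<le> a \<bullet> y"
    then have "(b / (a \<bullet> y)) *\<^sub>R y \<in> C"
      using \<open>b < 0\<close> that assms(1) by (intro conicD) (auto simp: divide_nonpos_neg)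
    then have "b < a \<bullet> ((b / (a \<bullet> y)) *\<^sub>R y)"
      by (rule ab(2))
    with \<open>\<not> 0 \<le> a \<bullet> y\<close> show False
      by simp
  qed
  with ab(1) \<open>b < 0\<close> show thesis
    using that[of a] by simp
qed

text \<open>Bipolar theorem: a point outside \<open>W\<close> lies outside the closed convex cone spanned by \<open>W\<close>,
  and a separating functional yields a point of \<open>polar W\<close> that excludes it from
  \<open>polar (polar W)\<close>.\<close>
lemma polar_polar_eq:
  fixes W :: "'a::euclidean_space set"
  assumes W: "W \<subseteq> sphere 0 1" "compact W" "W \<noteq> {}" and cc: "cone_convex W"
  shows "polar (polar W) = W"
proof
  show "polar (polar W) \<subseteq> W"
  proof
    fix x assume xpp: "x \<in> polar (polar W)"
    show "x \<in> W"
    proof (rule ccontr)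
      assume "x \<notin> W"
      have "norm x = 1"
        using xpp by (simp add: mem_polar)
      have "0 \<notin> W"
        using W(1) by auto
      have "convex (conic hull W)"
        using conic_hull_convex_hull_eq[OF cc W(3)] convex_conic_hull[of "convex hull W"] by simp
      moreover have "closed (conic hull W)"
        using W(2) \<open>0 \<notin> W\<close> by (intro closed_conic_hull) simp
      moreover have "conic hull W \<noteq> {}"
        using W(3) by (simp add: conic_hull_eq_empty)
      moreover have "x \<notin> conic hull W"
      proof
        assume "x \<in> conic hull W"
        then obtain c w where "x = c *\<^sub>R w" "0 \<le> c" "w \<in> W"
          by (auto simp: conic_hull_explicit)
        moreover have "norm w = 1"
          using \<open>w \<in> W\<close> W(1) by auto
        ultimately show False
          using \<open>x \<notin> W\<close> \<open>norm x = 1\<close> by auto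
      qed
      ultimately obtain a where a: "a \<bullet> x < 0" "\<And>y. y \<in> conic hull W \<Longrightarrow> 0 \<le> a \<bullet> y"
        by (meson separating_halfspace_closed_convex_cone conic_conic_hull)
      then have "a \<noteq> 0"
        by auto
      then have "a /\<^sub>R norm a \<in> polar W"
        using a(2) by (auto simp: mem_polar inner_commute hull_inc)
      then have "0 \<le> (a /\<^sub>R norm a) \<bullet> x"
        using xpp unfolding mem_polar[of x] by blast
      with a(1) \<open>a \<noteq> 0\<close> show False
        by (simp add: zero_le_mult_iff)
    qed
  qed
  show "W \<subseteq> polar (polar W)"
    using W(1) by (rule subset_polar_polar)
qed

lemma polar_polar_hclosure_Hsconv:
  assumes "W \<in> hclosure Hsconv"
  shows "polar (polar W) = W"
  using assms Hspace_hclosure[OF assms] compact_Hspace[OF Hspace_hclosure[OF assms]]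
  by (intro polar_polar_eq cone_convex_hclosure_Hsconv) (auto simp: Hspace_def)

lemma span_disjoint_convex_hull_if_orthogonal:
  fixes W V K :: "'a::euclidean_space set"
  assumes K: "s_convex K" and near: "mutually_near W K (sqrt 2)" and Ws: "W \<subseteq> sphere 0 1"
    and orth: "\<And>w v. w \<in> W \<Longrightarrow> v \<in> V \<Longrightarrow> w \<bullet> v = 0"
  shows "span V \<inter> convex hull K = {}"
proof (rule ccontr)
  assume "span V \<inter> convex hull K \<noteq> {}"
  then obtain x where x: "x \<in> span V" "x \<in> convex hull K"
    by blast
  define m where "m = x /\<^sub>R norm x"
  obtain p where "\<And>x. x \<in> convex hull K \<Longrightarrow> p \<bullet> x < 0 \<and> x /\<^sub>R norm x \<in> K"
    using s_convex_convex_hull[OF K] by blast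
  then have "m \<in> K"
    using x(2) by (simp add: m_def)
  have "m \<in> span V"
    using x(1) by (simp add: m_def span_mul)
  obtain w where w: "w \<in> W" "dist m w < sqrt 2"
    using near \<open>m \<in> K\<close> unfolding mutually_near_def by blast
  have "K \<subseteq> sphere 0 1"
    using K by (simp add: s_convex_def hemispherical_def)
  then have "m \<in> sphere 0 1" "w \<in> sphere 0 1"
    using \<open>m \<in> K\<close> w(1) Ws by blast+
  then have "0 < m \<bullet> w"
    using w(2) by (rule inner_pos_if_dist_less_sqrt2)
  moreover have "orthogonal w m"
    using orth w(1) by (intro orthogonal_to_span[OF \<open>m \<in> span V\<close>]) (simp add: orthogonal_def)
  ultimately show False
    by (simp add: orthogonal_def inner_commute)
qed

text \<open>If \<open>W\<close> were orthogonal to its polar \<open>V\<close>, then \<open>W = polar V\<close> would contain the unit sphere of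
  \<open>V\<^sup>\<bottom>\<close>. A functional separating \<open>span V\<close> from the convex hull of an approximating s-convex \<open>K\<close>
  vanishes on \<open>V\<close>, so its negative direction lies in \<open>W\<close> but is at distance more than \<open>\<surd>2\<close>
  from \<open>K\<close>.\<close>
lemma hclosure_Hsconv_inner_polar_pos:
  fixes W :: "'a::euclidean_space set"
  assumes W: "W \<in> hclosure Hsconv"
  shows "\<exists>u\<in>W. \<exists>y\<in>polar W. 0 < u \<bullet> y"
proof (rule ccontr)
  assume "\<not> ?thesis"
  then have orth: "u \<bullet> y = 0" if "u \<in> W" "y \<in> polar W" for u y
    using that by (force simp: mem_polar)
  have Ws: "W \<subseteq> sphere 0 1"
    using Hspace_hclosure[OF W] by (simp add: Hspace_def)
  have "0 < sqrt (2::real)"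
    by simp
  then obtain K where K: "K \<in> Hsconv" "mutually_near W K (sqrt 2)"
    using hclosure_mutually_near[OF W Hsconv_subset_Hspace] by blast
  have Ks: "K \<subseteq> sphere 0 1" "compact K" "K \<noteq> {}" "s_convex K"
    using K(1) compact_Hspace by (auto simp: Hsconv_def Hspace_def)
  have "span (polar W) \<inter> convex hull K = {}"
    using Ks(4) K(2) Ws orth by (rule span_disjoint_convex_hull_if_orthogonal)
  moreover have "convex hull K \<noteq> {}"
    using Ks(3) by simp
  ultimately obtain a b where ab: "\<And>x. x \<in> span (polar W) \<Longrightarrow> a \<bullet> x < b"
    "\<And>x. x \<in> convex hull K \<Longrightarrow> b < a \<bullet> x"
    using separating_hyperplane_closed_compact[OF subspace_imp_convex[OF subspace_span]
        closed_span convex_convex_hull compact_convex_hull[OF Ks(2)]]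
    by meson
  have "0 < b"
    using ab(1)[of 0] by (simp add: span_zero)
  have a_orth: "a \<bullet> v = 0" if "v \<in> polar W" for v
  proof (rule ccontr)
    assume "a \<bullet> v \<noteq> 0"
    moreover have "a \<bullet> ((b / (a \<bullet> v)) *\<^sub>R v) < b"
      using that by (intro ab(1) span_mul span_base)
    ultimately show False
      by simp
  qed
  obtain k0 where "k0 \<in> K"
    using Ks(3) by blast
  then have "a \<noteq> 0"
    using ab(2)[OF hull_inc] \<open>0 < b\<close> by force
  then have "- a /\<^sub>R norm a \<in> sphere 0 1"
    by simp
  moreover have "0 \<le> v \<bullet> (- a /\<^sub>R norm a)" if "v \<in> polar W" for v
    using a_orth[OF that] by (simp add: inner_commute)
  ultimately have "- a /\<^sub>R norm a \<in> polar (polar W)"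
    unfolding mem_polar[of _ "polar W"] by blast
  then have "- a /\<^sub>R norm a \<in> W"
    using polar_polar_hclosure_Hsconv[OF W] by simp
  then obtain k where k: "k \<in> K" "dist (- a /\<^sub>R norm a) k < sqrt 2"
    using K(2) unfolding mutually_near_def by blast
  moreover have "- a /\<^sub>R norm a \<in> sphere 0 1" "k \<in> sphere 0 1"
    using \<open>- a /\<^sub>R norm a \<in> W\<close> k(1) Ws Ks(1) by blast+
  ultimately have "0 < (- a /\<^sub>R norm a) \<bullet> k"
    by (intro inner_pos_if_dist_less_sqrt2) blast+
  moreover have "0 < a \<bullet> k"
    using ab(2)[OF hull_inc[OF k(1)]] \<open>0 < b\<close> by simp
  ultimately show False
    using \<open>a \<noteq> 0\<close> by (simp add: mult_less_0_iff)
qed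

lemma norm_convex_combination_le_1:
  fixes A B :: "'a::real_normed_vector"
  assumes "norm A = 1" "norm B = 1" "0 \<le> t" "t \<le> 1"
  shows "norm ((1 - t) *\<^sub>R A + t *\<^sub>R B) \<le> 1"
  using norm_triangle_ineq[of "(1 - t) *\<^sub>R A" "t *\<^sub>R B"] assms by simp

lemma inner_le_inner_normalize:
  fixes u z :: "'a::real_inner"
  assumes "0 \<le> u \<bullet> z" "z \<noteq> 0" "norm z \<le> 1"
  shows "u \<bullet> z \<le> u \<bullet> (z /\<^sub>R norm z)"
proof -
  have "u \<bullet> z * norm z \<le> u \<bullet> z"
    using assms(1,3) by (simp add: mult_left_le)
  moreover have "0 < norm z"
    using assms(2) by simp
  ultimately have "u \<bullet> z \<le> (u \<bullet> z) / norm z"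
    by (simp add: le_divide_eq)
  then show ?thesis
    by (simp add: divide_inverse mult.commute)
qed

lemma cap_in_Hsconv:
  fixes V :: "'a::euclidean_space set"
  assumes V: "V \<subseteq> sphere 0 1" "closed V" "cone_convex V"
    and u: "u \<in> sphere 0 1" and e: "0 < e" and y: "y \<in> V" "e \<le> u \<bullet> y"
  shows "V \<inter> {x. e \<le> u \<bullet> x} \<in> Hsconv"
proof -
  define K where "K = V \<inter> {x. e \<le> u \<bullet> x}"
  have "K \<in> Hspace"
    using V(1,2) y by (auto simp: K_def Hspace_def intro!: closed_Int closed_halfspace_ge)
  moreover have "K \<inter> hemi (- u) = {}"
    using e by (auto simp: K_def hemi_def)
  then have "hemispherical K"
    using u V(1) by (auto simp: hemispherical_def K_def)
  moreover have "sarc A B \<subseteq> K" if AB: "A \<in> K" "B \<in> K" for A B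
  proof
    fix q assume "q \<in> sarc A B"
    then obtain t where t: "0 \<le> t" "t \<le> 1"
      and q: "q = ((1 - t) *\<^sub>R A + t *\<^sub>R B) /\<^sub>R norm ((1 - t) *\<^sub>R A + t *\<^sub>R B)"
      unfolding sarc_def by blast
    define z where "z = (1 - t) *\<^sub>R A + t *\<^sub>R B"
    have "(1 - t) * e \<le> (1 - t) * (u \<bullet> A)" "t * e \<le> t * (u \<bullet> B)"
      using AB t by (simp_all add: K_def mult_left_mono)
    then have "e \<le> u \<bullet> z"
      by (simp add: z_def inner_add_right algebra_simps)
    then have "z \<noteq> 0"
      using e by auto
    have "z \<in> convex hull V"
      using AB t unfolding z_def K_def
      by (intro convexD_alt[OF convex_convex_hull]) (auto intro: hull_inc)
    then have "q \<in> V"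
      using V(3) \<open>z \<noteq> 0\<close> by (simp add: cone_convex_def q z_def[symmetric])
    have "norm z \<le> 1"
      using AB t V(1) unfolding z_def K_def by (intro norm_convex_combination_le_1) auto
    then have "u \<bullet> z \<le> u \<bullet> q"
      unfolding q z_def[symmetric] using \<open>e \<le> u \<bullet> z\<close> e \<open>z \<noteq> 0\<close>
      by (intro inner_le_inner_normalize) auto
    with \<open>e \<le> u \<bullet> z\<close> have "e \<le> u \<bullet> q"
      by linarith
    with \<open>q \<in> V\<close> show "q \<in> K"
      by (simp add: K_def)
  qed
  ultimately show ?thesis
    by (simp add: Hsconv_def s_convex_def K_def)
qed

lemma cone_convex_push_towards:
  fixes V :: "'a::euclidean_space set"
  assumes V: "V \<subseteq> sphere 0 1" "cone_convex V" and x: "x \<in> V" "0 \<le> u \<bullet> x"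
    and y: "y \<in> V" "0 < u \<bullet> y" and s: "0 < s" "s \<le> 1"
  shows "\<exists>q\<in>V. s * (u \<bullet> y) \<le> u \<bullet> q \<and> dist x q \<le> 4 * s"
proof -
  define z where "z = (1 - s) *\<^sub>R x + s *\<^sub>R y"
  define q where "q = z /\<^sub>R norm z"
  have "s * (u \<bullet> y) \<le> u \<bullet> z"
    using x(2) s(2) by (simp add: z_def inner_add_right)
  moreover have "0 < s * (u \<bullet> y)"
    using s(1) y(2) by simp
  ultimately have "z \<noteq> 0" and uz: "0 \<le> u \<bullet> z"
    by auto
  have nx: "norm x = 1" "norm y = 1"
    using x(1) y(1) V(1) by auto
  then have "norm z \<le> 1"
    unfolding z_def using s by (intro norm_convex_combination_le_1) auto
  have "z \<in> convex hull V"
    using x(1) y(1) s unfolding z_def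
    by (intro convexD_alt[OF convex_convex_hull]) (auto intro: hull_inc)
  then have "q \<in> V"
    using V(2) \<open>z \<noteq> 0\<close> by (simp add: cone_convex_def q_def)
  moreover have "s * (u \<bullet> y) \<le> u \<bullet> q"
    using inner_le_inner_normalize[OF uz \<open>z \<noteq> 0\<close> \<open>norm z \<le> 1\<close>]
      \<open>s * (u \<bullet> y) \<le> u \<bullet> z\<close> by (simp add: q_def)
  moreover have "dist x q \<le> 4 * s"
  proof -
    have "x \<noteq> 0"
      using nx by auto
    then have "dist x q \<le> 2 * norm (x - z)"
      using norm_diff_normalize_le[of x z] \<open>z \<noteq> 0\<close> nx by (simp add: q_def dist_norm)
    also have "norm (x - z) = s * norm (x - y)"
      using s(1) by (simp add: z_def algebra_simps flip: scaleR_diff_right)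
    also have "norm (x - y) \<le> 2"
      using norm_triangle_ineq4[of x y] nx by simp
    finally show ?thesis
      using s by simp
  qed
  ultimately show ?thesis
    by blast
qed

text \<open>The caps \<open>V \<inter> {x. e \<le> u \<bullet> x}\<close> are s-convex, and pushing a point of \<open>V\<close> slightly towards
  \<open>y\<close> moves it into such a cap.\<close>
lemma hclosure_HsconvI:
  fixes V :: "'a::euclidean_space set"
  assumes V: "V \<in> Hspace" "cone_convex V"
    and u: "u \<in> sphere 0 1" "\<And>v. v \<in> V \<Longrightarrow> 0 \<le> u \<bullet> v" and y: "y \<in> V" "0 < u \<bullet> y"
  shows "V \<in> hclosure Hsconv"
proof (rule hclosureI_mutually_near[OF V(1) Hsconv_subset_Hspace])
  fix d :: real assume "d > 0"
  define s where "s = min 1 (d/8)"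
  have s: "0 < s" "s \<le> 1" "4 * s < d"
    using \<open>d > 0\<close> by (auto simp: s_def)
  define K where "K = V \<inter> {x. s * (u \<bullet> y) \<le> u \<bullet> x}"
  have Vs: "V \<subseteq> sphere 0 1" "closed V"
    using V(1) by (auto simp: Hspace_def)
  have "K \<in> Hsconv"
    unfolding K_def using Vs V(2) u(1) s y
    by (intro cap_in_Hsconv) (auto simp: mult_le_cancel_right1)
  moreover have "\<exists>q\<in>K. dist x q < d" if "x \<in> V" for x
    using cone_convex_push_towards[OF Vs(1) V(2) that u(2)[OF that] y s(1,2)] s(3)
    by (force simp: K_def)
  moreover have "K \<subseteq> V"
    by (simp add: K_def)
  ultimately have "mutually_near V K d"
    using \<open>d > 0\<close> unfolding mutually_near_def by force
  with \<open>K \<in> Hsconv\<close> show "\<exists>K\<in>Hsconv. mutually_near V K d"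
    by blast
qed

lemma polar_hclosure_Hsconv:
  fixes W :: "'a::euclidean_space set"
  assumes W: "W \<in> hclosure Hsconv"
  shows "polar W \<in> hclosure Hsconv"
proof -
  obtain u y where uy: "u \<in> W" "y \<in> polar W" "0 < u \<bullet> y"
    using hclosure_Hsconv_inner_polar_pos[OF W] by blast
  have "u \<in> sphere 0 1"
    using uy(1) Hspace_hclosure[OF W] by (auto simp: Hspace_def)
  moreover have "polar W \<in> Hspace"
    using uy(2) closed_polar by (auto simp: Hspace_def polar_def)
  moreover have "0 \<le> u \<bullet> v" if "v \<in> polar W" for v
    using that uy(1) by (simp add: mem_polar)
  ultimately show ?thesis
    using cone_convex_polar uy(2,3) by (intro hclosure_HsconvI) auto
qed

lemma polar_singleton: "polar {P} = hemi P"
  by (auto simp: polar_def hemi_def)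

lemma singleton_in_Hsconv:
  assumes "P \<in> sphere (0::'a::euclidean_space) 1"
  shows "{P} \<in> Hsconv"
proof -
  have "{P} \<inter> hemi (- P) = {}"
    using assms by (auto simp: hemi_def dot_square_norm)
  moreover have "sarc P P = {P}"
    using assms by (auto simp: sarc_def simp flip: scaleR_left_distrib)
  ultimately show ?thesis
    using assms by (auto simp: Hsconv_def Hspace_def s_convex_def hemispherical_def)
qed

text \<open>Two closed hemispheres always meet: at the normalized sum of their poles, or, for
  antipodal poles, at any unit vector orthogonal to them, which exists since \<open>n \<ge> 1\<close>.\<close>
lemma not_hemispherical_hemi:
  fixes P :: "'a::euclidean_space"
  assumes P: "P \<in> Basis" and dim: "DIM('a) \<ge> 2"
  shows "\<not> hemispherical (hemi P)"
proof
  assume "hemispherical (hemi P)"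
  then obtain Q where Q: "Q \<in> sphere 0 1" "hemi P \<inter> hemi Q = {}"
    by (auto simp: hemispherical_def)
  have Ps: "P \<in> sphere 0 1"
    using P by simp
  show False
  proof (cases "P + Q = 0")
    case False
    have "-1 \<le> P \<bullet> Q"
      using inner_unit_sphere_bounds[OF Ps Q(1)] by simp
    then have "0 \<le> P \<bullet> (P + Q)" "0 \<le> Q \<bullet> (P + Q)"
      using Ps Q(1) by (simp_all add: inner_add_right dot_square_norm inner_commute)
    then have "(P + Q) /\<^sub>R norm (P + Q) \<in> hemi P \<inter> hemi Q"
      using False by (simp add: hemi_def)
    with Q(2) show False
      by blast
  next
    case True
    obtain b :: 'a where b: "b \<in> Basis" "b \<noteq> P"
    proof -
      have "\<not> Basis \<subseteq> {P}"
        using dim card_mono[of "{P}" "Basis :: 'a set"] by auto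
      with that show thesis
        by blast
    qed
    moreover have "Q = - P"
      using True by (simp add: eq_neg_iff_add_eq_0 add.commute)
    ultimately have "b \<in> hemi P \<inter> hemi Q"
      using P by (simp add: hemi_def inner_not_same_Basis)
    with Q(2) show False
      by blast
  qed
qed

lemma polar_image_Hsconv_neq:
  assumes dim: "DIM('a::euclidean_space) \<ge> 2"
  shows "polar ` (Hsconv :: 'a set set) \<noteq> Hsconv"
proof
  assume eq: "polar ` (Hsconv :: 'a set set) = Hsconv"
  obtain P :: 'a where P: "P \<in> Basis"
    using nonempty_Basis by blast
  then have "polar {P} \<in> Hsconv"
    using eq singleton_in_Hsconv[of P] by auto
  then have "hemispherical (hemi P)"
    by (simp add: polar_singleton Hsconv_def s_convex_def)
  with not_hemispherical_hemi[OF P dim] show False ..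
qed

theorem proposition2:
  assumes "DIM('a::euclidean_space) \<ge> 2"
  shows "hclosure (Hsconv :: 'a set set) \<subseteq> Hpolar
       \<and> polar ` (Hsconv :: 'a set set) \<noteq> Hsconv
       \<and> polar ` hclosure (Hsconv :: 'a set set) = hclosure Hsconv
       \<and> inj_on polar (hclosure (Hsconv :: 'a set set))"
proof (intro conjI)
  show "hclosure (Hsconv :: 'a set set) \<subseteq> Hpolar"
    using hclosure_Hsconv_inner_polar_pos Hspace_hclosure by (fastforce simp: Hpolar_def)
  show "polar ` (Hsconv :: 'a set set) \<noteq> Hsconv"
    using assms by (rule polar_image_Hsconv_neq)
  show "polar ` hclosure (Hsconv :: 'a set set) = hclosure Hsconv"
  proof
    show "polar ` hclosure Hsconv \<subseteq> (hclosure Hsconv :: 'a set set)"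
      using polar_hclosure_Hsconv by blast
    show "hclosure Hsconv \<subseteq> polar ` (hclosure Hsconv :: 'a set set)"
      using polar_hclosure_Hsconv polar_polar_hclosure_Hsconv by (metis image_eqI subsetI)
  qed
  show "inj_on polar (hclosure (Hsconv :: 'a set set))"
    by (rule inj_onI) (metis polar_polar_hclosure_Hsconv)
qed

end
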